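(* For each $N\ge1$ let $\{a_n\}_{n=0}^{N-1},\{b_n\}_{n=0}^{N-1},\{c_n\}_{n=1}^{N}$ (depending on $N$) be real sequences with $c_n>0$, $a_{N-1}=0$, $b_{N-1}=\tfrac12$, $c_N=1$, satisfying for $n=1,\dots,N-1$ $$a_{n-1}=a_n\Big(\frac{1}{c_n^2+1}\Big)^{1/2}+b_n\Big(\frac{1}{c_n^2+1}\Big)^{3/2}c_n^2,\quad b_{n-1}=b_n\Big(\frac{1}{c_n^2+1}\Big)^{3/2}+\frac{c_n}{c_n^2+1},\quad -3b_nc_n+(c_n^2+1)^{1/2}(1-c_n^2)=0,$$ and with $\Delta t_N=1/N$, $\Sigma_0>0$, $\sigma_u>0$ define $\Sigma_n=\Sigma_{n-1}/(1+c_n^2)$, $\beta_n=c_n\sigma_u\Delta t_N^{1/2}\Sigma_{n-1}^{-1/2}$, $\lambda_n=\beta_n\Sigma_{n-1}/(\beta_n^2\Sigma_{n-1}+\sigma_u^2\Delta t_N)$ for $n=1,\dots,N$. Then for every $t\in(0,1)$, as $N\to\infty$: $c_{[Nt]}\to0$, $b_{[Nt]}\to\infty$, $a_{[Nt]}\to\infty$, and $$\frac{c_{[Nt]}}{\Delta t_N^{1/2}}\to\frac{\sqrt3}{3}\frac{1}{(1-t)^{1/2}},\quad b_{[Nt]}\Delta t_N^{1/2}\to\frac{\sqrt3}{3}(1-t)^{1/2},\quad a_{[Nt]}\Delta t_N^{1/2}\to\frac{\sqrt3}{6}(1-t)^{1/2},$$ $$\Sigma_{[Nt]}\to(1-t)^{1/3}\Sigma_0,\qquad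 \lambda_{[Nt]}\to\frac{\sqrt3\,\Sigma_0^{1/2}}{3(1-t)^{1/3}\sigma_u},\qquad \frac{\beta_{[Nt]}}{\Delta t_N}\to\frac{\sqrt3\,\sigma_u}{3(1-t)^{2/3}\Sigma_0^{1/2}}.$$
   Context: $[x]$ denotes the integer part of $x$. These sequences describe the equilibrium of the risk-seeking insider model (Model 3) of an $N$-period Kyle-type insider trading model, where $\Sigma_n$ is the conditional variance of the asset value after $n$ rounds, $\lambda_n$ the liquidity parameter and $\beta_n$ the insider's trading intensity; the claim concerns only the sequences as defined here. *)

theory Defs
  imports Complex_Main
begin

fun Sigma :: "(nat \<Rightarrow> nat \<Rightarrow> real) \<Rightarrow> real \<Rightarrow> nat \<Rightarrow> nat \<Rightarrow> real" where
  "Sigma c S0 N 0 = S0"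
| "Sigma c S0 N (Suc n) = Sigma c S0 N n / (1 + (c N (Suc n))^2)"

definition dt :: "nat \<Rightarrow> real" where
  "dt N = 1 / real N"

definition beta :: "(nat \<Rightarrow> nat \<Rightarrow> real) \<Rightarrow> real \<Rightarrow> real \<Rightarrow> nat \<Rightarrow> nat \<Rightarrow> real" where
  "beta c S0 su N n = c N n * su * dt N powr (1/2) * Sigma c S0 N (n - 1) powr (-1/2)"

definition lambda :: "(nat \<Rightarrow> nat \<Rightarrow> real) \<Rightarrow> real \<Rightarrow> real \<Rightarrow> nat \<Rightarrow> nat \<Rightarrow> real" where
  "lambda c S0 su N n = beta c S0 su N n * Sigma c S0 N (n - 1) /
     ((beta c S0 su N n)^2 * Sigma c S0 N (n - 1) + su^2 * dt N)"

end

theory Submission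
  imports Defs "HOL-Real_Asymp.Real_Asymp"
begin

text \<open>
  Write \<open>x = c n ^ 2\<close>. The equation for \<open>c\<close> gives \<open>b n = (1 - x) sqrt (1 + x) / (3 c n)\<close>,
  and then the recursion for \<open>b\<close> gives \<open>b (n - 1) = (1 + 2 x) / (3 c n (1 + x))\<close>. Hence
  \<open>b (n - 1)^2 - b n^2 = 1/3 - O(x^2)\<close> and \<open>9 x b n^2 \<le> 1\<close>; starting from \<open>b (N - 1) = 1/2\<close>
  this yields \<open>b n^2 = (N - n)/3 + O(1)\<close> and \<open>c n^2 = O(1/(N - n))\<close>, so at \<open>n = [N t]\<close>
  we get \<open>b ~ sqrt (N (1 - t) / 3)\<close> and \<open>c ~ 1/(3 b)\<close>.

  The difference \<open>b n - 2 a n\<close> stays in \<open>[0, 3/2]\<close>: each backward step damps it by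
  \<open>sqrt (1 + x)\<close> and adds \<open>c n^3 / (1 + x) \<le> (1 / b n - 1 / b (n - 1)) / 2\<close>, which telescopes.
  So \<open>a ~ b/2\<close>.

  Finally \<open>b (n - 1)^2 = \<rho>^2 (1 + x)^3 b n^2\<close> with \<open>1 \<le> \<rho> \<le> 1 + 2 x^3\<close>, so \<open>b 0^2 / b n^2\<close>
  equals \<open>\<Prod>j\<le>n. (1 + c j^2)^3 = (\<Sigma>\<^sub>0 / \<Sigma>\<^sub>n)^3\<close> up to a factor \<open>exp (O(1/N^2))\<close>. This gives
  \<open>\<Sigma>\<^sub>[\<^sub>N\<^sub>t\<^sub>]^3 \<longlonglongrightarrow> (1 - t) \<Sigma>\<^sub>0^3\<close>, and the limits of \<open>\<beta>\<close> and \<open>\<lambda>\<close> follow.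
\<close>

section \<open>One step of the backward recursion\<close>

lemma backward_step_closed_forms:
  fixes a b a' b' c :: real
  assumes c: "c > 0"
    and rec_a: "a' = a * (1 / (c^2 + 1)) powr (1/2) + b * (1 / (c^2 + 1)) powr (3/2) * c^2"
    and rec_b: "b' = b * (1 / (c^2 + 1)) powr (3/2) + c / (c^2 + 1)"
    and rec_c: "- 3 * b * c + (c^2 + 1) powr (1/2) * (1 - c^2) = 0"
  shows "b = (1 - c^2) * sqrt (1 + c^2) / (3 * c)"
    and "b' = (1 + 2 * c^2) / (3 * c * (1 + c^2))"
    and "b' - 2 * a' = (b - 2 * a) / sqrt (1 + c^2) + c^3 / (1 + c^2)"
proof -
  define p where "p = 1 + c^2"
  define s where "s = sqrt p"
  have p: "p > 0" and s: "s > 0" "s * s = p"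
    by (simp_all add: p_def s_def add_pos_nonneg)
  have half: "(1 / p) powr (1/2) = 1 / s"
    using p by (simp add: s_def powr_half_sqrt real_sqrt_divide)
  have three_halves: "(1 / p) powr (3/2) = 1 / (p * s)"
  proof -
    have "(1 / p) powr (3/2) = (1 / p) powr (1 + 1/2)" by simp
    also have "\<dots> = 1 / p * (1 / p) powr (1/2)" using p by (subst powr_add) simp
    finally show ?thesis using half by simp
  qed
  have rec_a': "a' = a / s + b / (p * s) * c^2"
    using rec_a half three_halves by (simp add: p_def add.commute)
  have rec_b': "b' = b / (p * s) + c / p"
    using rec_b three_halves by (simp add: p_def add.commute)
  have rec_c': "b = (1 - c^2) * s / (3 * c)"
    using rec_c c p by (simp add: s_def p_def powr_half_sqrt field_simps)
  show "b = (1 - c^2) * sqrt (1 + c^2) / (3 * c)"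
    using rec_c' by (simp add: s_def p_def)
  have b': "b' = (1 + 2 * c^2) / (3 * c * p)"
    unfolding rec_b' rec_c' using c s p by (simp add: field_simps) (simp add: p_def power2_eq_square)
  then show "b' = (1 + 2 * c^2) / (3 * c * (1 + c^2))"
    by (simp add: p_def)
  have b_div_s: "b / s = (1 - c^2) / (3 * c)"
    unfolding rec_c' using s by simp
  have "a' = a / s + (b / s) / p * c^2"
    using rec_a' by (simp add: mult.commute)
  also have "\<dots> = a / s + (1 - c^2) * c / (3 * p)"
    using c by (simp add: b_div_s power2_eq_square)
  finally have "b' - 2 * a' = (1 + 2 * c^2) / (3 * c * p) - 2 * (a / s) - 2 * ((1 - c^2) * c / (3 * p))"
    unfolding b' by simp
  also have "\<dots> = (1 - c^2) / (3 * c) - 2 * (a / s) + c^3 / p"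
    using c p by (simp add: field_simps) (simp add: p_def algebra_simps power2_eq_square power3_eq_cube)
  also have "\<dots> = (b - 2 * a) / s + c^3 / p"
    using b_div_s by (simp add: diff_divide_distrib)
  finally have "b' - 2 * a' = (b - 2 * a) / s + c^3 / p" .
  then show "b' - 2 * a' = (b - 2 * a) / sqrt (1 + c^2) + c^3 / (1 + c^2)"
    by (simp add: s_def p_def)
qed

lemma closed_form_sq_increment_bounds:
  fixes x :: real
  assumes "0 < x" "x < 1"
  defines "B \<equiv> (1 - x) * sqrt (1 + x) / (3 * sqrt x)"
    and "B' \<equiv> (1 + 2 * x) / (3 * sqrt x * (1 + x))"
  shows "1/3 - x^2 / 9 \<le> B'^2 - B^2" "B'^2 - B^2 \<le> 1/3"
proof -
  have "B'^2 = (1 + 2 * x)^2 / (9 * x * (1 + x)^2)" "B^2 = (1 - x)^2 * (1 + x) / (9 * x)"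
    using \<open>0 < x\<close> by (simp_all add: B_def B'_def power_divide power_mult_distrib)
  moreover have "(1 + 2 * x)^2 / (9 * x * (1 + x)^2) - (1 - x)^2 * (1 + x) / (9 * x)
      = 1/3 - x^2 * (1 + x + x^2) / (9 * (1 + x)^2)"
    using \<open>0 < x\<close> by (simp add: field_simps) algebra
  ultimately have "B'^2 - B^2 = 1/3 - x^2 * (1 + x + x^2) / (9 * (1 + x)^2)"
    by simp
  moreover have "x^2 * (1 + x + x^2) \<le> x^2 * (1 + x)^2"
    using \<open>0 < x\<close> by (intro mult_left_mono) (auto simp: power2_eq_square algebra_simps)
  then have "x^2 * (1 + x + x^2) / (9 * (1 + x)^2) \<le> x^2 / 9"
    using assms by (simp add: divide_simps)
  moreover have "0 \<le> x^2 * (1 + x + x^2) / (9 * (1 + x)^2)"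
    using assms by simp
  ultimately show "1/3 - x^2 / 9 \<le> B'^2 - B^2" "B'^2 - B^2 \<le> 1/3"
    by linarith+
qed

lemma closed_form_ratio_bounds:
  fixes x :: real
  assumes "0 < x" "x \<le> 1/2"
  shows "1 \<le> (1 + 2 * x) / ((1 - x^2) * (1 + x)^2)"
    and "(1 + 2 * x) / ((1 - x^2) * (1 + x)^2) \<le> 1 + 2 * x^3"
proof -
  have expand: "(1 - x^2) * (1 + x)^2 = 1 + 2 * x - 2 * x^3 - x^4"
    by (simp add: algebra_simps power2_eq_square power3_eq_cube power4_eq_xxxx)
  have "x^2 \<le> (1/2)^2" "x^3 \<le> (1/2)^3"
    using assms by (intro power_mono; simp)+
  then have small: "4 * x^2 + 2 * x^3 \<le> 3"
    by (simp add: power_divide)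
  moreover have "x^2 < 1"
    using \<open>x^2 \<le> (1/2)^2\<close> by (simp add: power_divide)
  ultimately have pos: "(1 - x^2) * (1 + x)^2 > 0"
    using assms by simp
  have "0 \<le> 2 * x^3 + x^4"
    using assms by simp
  then show "1 \<le> (1 + 2 * x) / ((1 - x^2) * (1 + x)^2)"
    using pos unfolding expand by (simp add: divide_simps)
  have "(1 + 2 * x^3) * (1 + 2 * x - 2 * x^3 - x^4) - (1 + 2 * x) = x^4 * (3 - 4 * x^2 - 2 * x^3)"
    by (simp add: algebra_simps power2_eq_square power3_eq_cube power4_eq_xxxx)
  also have "\<dots> \<ge> 0"
    using small by simp
  finally show "(1 + 2 * x) / ((1 - x^2) * (1 + x)^2) \<le> 1 + 2 * x^3"
    using pos unfolding expand by (simp add: divide_simps)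
qed

lemma closed_form_inverse_increment:
  fixes c :: real
  assumes c: "0 < c" "c^2 < 1"
  shows "2 * c^3 \<le> 3 * c / ((1 - c^2) * sqrt (1 + c^2)) - 3 * c * (1 + c^2) / (1 + 2 * c^2)"
proof -
  define x where "x = c^2"
  have x: "0 < x" "x < 1"
    using c by (simp_all add: x_def)
  have "sqrt (1 + x) \<le> 1 + x / 2"
    by (rule real_le_lsqrt) (use x in \<open>auto simp: power2_eq_square algebra_simps\<close>)
  then have "3 * c / ((1 - x) * (1 + x / 2)) \<le> 3 * c / ((1 - x) * sqrt (1 + x))"
    using c x by (intro divide_left_mono mult_left_mono mult_pos_pos) auto
  moreover have "2 * c^3 \<le> 3 * c / ((1 - x) * (1 + x / 2)) - 3 * c * (1 + x) / (1 + 2 * x)"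
  proof -
    have "3 * (1 + 2 * x) - (2 * x * (1 + 2 * x) + 3 * (1 + x)) * ((1 - x) * (1 + x / 2))
        = 5/2 * x + 9/2 * x^3 + 2 * x^4"
      by algebra
    also have "\<dots> \<ge> 0"
      using x by simp
    finally have "(2 * x * (1 + 2 * x) + 3 * (1 + x)) * ((1 - x) * (1 + x / 2)) \<le> 3 * (1 + 2 * x)"
      by simp
    then have "2 * x * (1 + 2 * x) + 3 * (1 + x) \<le> 3 * (1 + 2 * x) / ((1 - x) * (1 + x / 2))"
      using x by (simp add: le_divide_eq)
    then have "2 * x \<le> 3 / ((1 - x) * (1 + x / 2)) - 3 * (1 + x) / (1 + 2 * x)"
      using x by (simp add: field_simps)
    from mult_left_mono[OF this, of c] show ?thesis
      using c by (simp add: x_def power3_eq_cube power2_eq_square algebra_simps)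
  qed
  ultimately show ?thesis
    by (simp add: x_def)
qed

text \<open>
  With \<open>u = N - n\<close>, the step from \<open>b n^2\<close> to \<open>b (n - 1)^2\<close> falls short of \<open>1/3\<close> by at most
  \<open>c n^4 / 9 \<le> 16 / (729 u^2)\<close>; the budget \<open>(u - 1) / (12 u)\<close> absorbs all these shortfalls.
\<close>

lemma shortfall_budget_step:
  fixes u :: real
  assumes "u \<ge> 1"
  shows "(u - 1) / (12 * u) + 16 / (729 * u^2) \<le> u / (12 * (u + 1))"
proof -
  have "(u - 1) / (12 * u) + 16 / (729 * u^2) = (729 * u * (u - 1) + 192) / (8748 * u^2)"
    using assms by (simp add: field_simps power2_eq_square)
  also have "\<dots> \<le> u / (12 * (u + 1))"
    using assms by (simp add: field_simps power2_eq_square)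
  finally show ?thesis .
qed

section \<open>The backward recursion for fixed \<open>N\<close>\<close>

locale backward_recursion =
  fixes a b c :: "nat \<Rightarrow> real" and N :: nat
  assumes N_ge_1: "N \<ge> 1"
    and c_pos: "\<And>n. 1 \<le> n \<Longrightarrow> n \<le> N \<Longrightarrow> c n > 0"
    and a_terminal: "a (N - 1) = 0"
    and b_terminal: "b (N - 1) = 1/2"
    and rec_a: "\<And>n. 1 \<le> n \<Longrightarrow> n \<le> N - 1 \<Longrightarrow>
       a (n - 1) = a n * (1 / ((c n)^2 + 1)) powr (1/2)
                   + b n * (1 / ((c n)^2 + 1)) powr (3/2) * (c n)^2"
    and rec_b: "\<And>n. 1 \<le> n \<Longrightarrow> n \<le> N - 1 \<Longrightarrow>
       b (n - 1) = b n * (1 / ((c n)^2 + 1)) powr (3/2) + c n / ((c n)^2 + 1)"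
    and rec_c: "\<And>n. 1 \<le> n \<Longrightarrow> n \<le> N - 1 \<Longrightarrow>
       - 3 * b n * c n + ((c n)^2 + 1) powr (1/2) * (1 - (c n)^2) = 0"
begin

lemma c_pos_before_terminal: "1 \<le> n \<Longrightarrow> n \<le> N - 1 \<Longrightarrow> c n > 0"
  using c_pos by simp

lemma step_closed_forms:
  assumes "1 \<le> n" "n \<le> N - 1"
  shows "b n = (1 - c n^2) * sqrt (1 + c n^2) / (3 * c n)"
    and "b (n - 1) = (1 + 2 * c n^2) / (3 * c n * (1 + c n^2))"
    and "b (n - 1) - 2 * a (n - 1) = (b n - 2 * a n) / sqrt (1 + c n^2) + c n^3 / (1 + c n^2)"
  using backward_step_closed_forms[OF c_pos_before_terminal rec_a rec_b rec_c, OF assms assms assms assms]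
  by simp_all

lemma b_pos:
  assumes "n \<le> N - 1"
  shows "b n > 0"
proof (cases "n = N - 1")
  case True
  then show ?thesis
    using b_terminal by simp
next
  case False
  with assms have "1 \<le> Suc n" "Suc n \<le> N - 1"
    by auto
  with step_closed_forms(2)[of "Suc n"] c_pos_before_terminal[of "Suc n"] show ?thesis
    by (simp add: add_pos_nonneg)
qed

lemma c_eq_closed_form:
  assumes "1 \<le> n" "n \<le> N - 1"
  shows "c n = (1 - c n^2) * sqrt (1 + c n^2) / (3 * b n)"
proof -
  have "b n * (3 * c n) = (1 - c n^2) * sqrt (1 + c n^2)"
    using step_closed_forms(1)[OF assms] c_pos_before_terminal[OF assms] by simp
  then show ?thesis
    using b_pos[of n] assms by (simp add: eq_divide_eq mult.commute mult.left_commute)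
qed

lemma c_sq_lt_1:
  assumes "1 \<le> n" "n \<le> N - 1"
  shows "c n^2 < 1"
proof -
  have "0 < (1 - c n^2) * sqrt (1 + c n^2) / (3 * c n)"
    using b_pos[of n] step_closed_forms(1)[OF assms] assms by simp
  moreover have "0 < sqrt (1 + c n^2) / (3 * c n)"
    using c_pos_before_terminal[OF assms] by (simp add: add_pos_nonneg)
  ultimately show ?thesis
    by (simp add: zero_less_mult_iff times_divide_eq_right[symmetric] del: times_divide_eq_right)
qed

lemma c_mult_b_le:
  assumes "1 \<le> n" "n \<le> N - 1"
  shows "3 * c n * b n \<le> 1"
proof -
  define x where "x = c n^2"
  have x: "0 < x" "x < 1"
    using c_pos_before_terminal[OF assms] c_sq_lt_1[OF assms] assms by (simp_all add: x_def)
  have "(3 * c n * b n)^2 = (1 - x)^2 * (1 + x)"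
    using step_closed_forms(1)[OF assms] c_pos_before_terminal[OF assms] assms
    by (simp add: x_def power_mult_distrib power_divide)
  also have "\<dots> = (1 - x) * (1 - x^2)"
    by (simp add: algebra_simps power2_eq_square)
  also have "\<dots> \<le> 1 * 1"
    using x by (intro mult_mono) (auto simp: power2_eq_square mult_le_one)
  finally show ?thesis
    by (simp add: power2_le_imp_le)
qed

lemma c_sq_mult_b_sq_le:
  assumes "1 \<le> n" "n \<le> N - 1"
  shows "9 * c n^2 * b n^2 \<le> 1"
proof -
  have "(3 * c n * b n)^2 \<le> 1"
    using c_mult_b_le[OF assms] b_pos[of n] c_pos_before_terminal[OF assms] assms
    by (simp add: power_le_one)
  then show ?thesis
    by (simp add: power_mult_distrib)
qed

lemma c_sq_le_if_b_sq_ge: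
  assumes "1 \<le> n" "n \<le> N - 1" "0 < B" "B \<le> b n^2"
  shows "c n^2 \<le> 1 / (9 * B)"
proof -
  have "9 * c n^2 * B \<le> 9 * c n^2 * b n^2"
    using assms(4) by (intro mult_left_mono) auto
  with c_sq_mult_b_sq_le[OF assms(1,2)] assms(3) show ?thesis
    by (simp add: field_simps)
qed

lemma b_sq_step_bounds:
  assumes "1 \<le> n" "n \<le> N - 1"
  shows "b n^2 + 1/3 - (c n^2)^2 / 9 \<le> b (n - 1)^2" "b (n - 1)^2 \<le> b n^2 + 1/3"
proof -
  have "sqrt (c n^2) = c n"
    using c_pos_before_terminal[OF assms] by simp
  with closed_form_sq_increment_bounds[of "c n^2"] step_closed_forms(1,2)[OF assms]
    c_pos_before_terminal[OF assms] c_sq_lt_1[OF assms]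
  show "b n^2 + 1/3 - (c n^2)^2 / 9 \<le> b (n - 1)^2" "b (n - 1)^2 \<le> b n^2 + 1/3"
    by simp_all
qed

lemma b_sq_ratio:
  assumes "1 \<le> n" "n \<le> N - 1"
  defines "x \<equiv> c n^2"
  shows "b (n - 1)^2 = ((1 + 2 * x) / ((1 - x^2) * (1 + x)^2))^2 * (1 + x)^3 * b n^2"
proof -
  have x: "0 < x" "x < 1" "x^2 < 1"
    using c_pos_before_terminal[OF assms(1,2)] c_sq_lt_1[OF assms(1,2)]
    by (simp_all add: x_def power_less_one_iff)
  have "b n^2 = (1 - x)^2 * (1 + x) / (9 * x)"
    "b (n - 1)^2 = (1 + 2 * x)^2 / (9 * x * (1 + x)^2)"
    using step_closed_forms(1,2)[OF assms(1,2)] c_pos_before_terminal[OF assms(1,2)]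
    by (simp_all add: x_def power_divide power_mult_distrib)
  then show ?thesis
    using x by (simp add: field_simps) (simp add: algebra_simps power2_eq_square; algebra)
qed

lemma inverse_b_increment:
  assumes "1 \<le> n" "n \<le> N - 1"
  shows "2 * c n^3 \<le> 1 / b n - 1 / b (n - 1)"
  using closed_form_inverse_increment[OF c_pos_before_terminal c_sq_lt_1, OF assms assms]
    step_closed_forms(1,2)[OF assms]
  by simp

lemma b_sq_bounds_from_terminal:
  "k \<le> N - 1 \<Longrightarrow>
     1/4 + real k / 3 - real k / (12 * (real k + 1)) \<le> b (N - 1 - k)^2 \<and> b (N - 1 - k)^2 \<le> 1/4 + real k / 3"
proof (induction k)
  case 0
  have "b (N - 1)^2 = 1/4"
    by (simp only: b_terminal) (simp add: power_divide)
  then show ?case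
    by simp
next
  case (Suc k)
  define n where "n = N - 1 - k"
  have n: "1 \<le> n" "n \<le> N - 1" "N - 1 - Suc k = n - 1"
    using Suc.prems by (auto simp: n_def)
  have IH: "1/4 + real k / 3 - real k / (12 * (real k + 1)) \<le> b n^2" "b n^2 \<le> 1/4 + real k / 3"
    using Suc.IH[OF Suc_leD[OF Suc.prems]] unfolding n_def by blast+
  define x where "x = c n^2"
  have "real k / (12 * (real k + 1)) \<le> real k / 12"
    by (rule frac_le) auto
  then have "(real k + 1) / 4 \<le> b n^2"
    using IH by simp
  have "x \<le> 1 / (9 * ((real k + 1) / 4))"
    unfolding x_def by (rule c_sq_le_if_b_sq_ge[OF n(1,2) _ \<open>(real k + 1) / 4 \<le> b n^2\<close>]) simp
  moreover have "x > 0"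
    using c_pos_before_terminal[OF n(1,2)] by (simp add: x_def)
  ultimately have "x^2 \<le> (4 / (9 * (real k + 1)))^2"
    by (intro power_mono) simp_all
  also have "\<dots> = 16 / (81 * (real k + 1)^2)"
    by (simp only: power_divide power_mult_distrib) simp
  finally have "x^2 / 9 \<le> 16 / (729 * (real k + 1)^2)"
    by simp
  moreover have "real k / (12 * (real k + 1)) + 16 / (729 * (real k + 1)^2)
      \<le> (real k + 1) / (12 * (real k + 1 + 1))"
    using shortfall_budget_step[of "real k + 1"] by simp
  ultimately have "1/4 + (real k + 1) / 3 - (real k + 1) / (12 * (real k + 1 + 1)) \<le> b (n - 1)^2"
    using IH(1) b_sq_step_bounds(1)[OF n(1,2)] unfolding x_def add_divide_distrib by linarith
  moreover have "b (n - 1)^2 \<le> 1/4 + (real k + 1) / 3"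
    using IH(2) b_sq_step_bounds(2)[OF n(1,2)] unfolding add_divide_distrib by linarith
  moreover have "real (Suc k) = real k + 1"
    by simp
  ultimately show ?case
    unfolding n(3) by (simp add: add.commute)
qed

lemma b_sq_bounds:
  assumes "n \<le> N - 1"
  shows "1/6 + (real N - 1 - real n) / 3 \<le> b n^2"
    and "b n^2 \<le> 1/4 + (real N - 1 - real n) / 3"
    and "(real N - real n) / 4 \<le> b n^2"
proof -
  define k where "k = N - 1 - n"
  have k: "N - 1 - k = n" "real k = real N - 1 - real n" "real N - real n = real k + 1"
    using assms N_ge_1 by (auto simp: k_def)
  have frac: "real k / (12 * (real k + 1)) \<le> 1/12" "real k / (12 * (real k + 1)) \<le> real k / 12"
    by (simp add: divide_simps) (rule frac_le; simp)
  have "k \<le> N - 1"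
    by (simp add: k_def)
  from b_sq_bounds_from_terminal[OF this] have
    "1/4 + real k / 3 - real k / (12 * (real k + 1)) \<le> b n^2" "b n^2 \<le> 1/4 + real k / 3"
    unfolding k(1) by simp_all
  moreover have "(real k + 1) / 4 = 1/4 + real k / 3 - real k / 12"
    by simp
  ultimately show "1/6 + (real N - 1 - real n) / 3 \<le> b n^2"
    and "b n^2 \<le> 1/4 + (real N - 1 - real n) / 3"
    and "(real N - real n) / 4 \<le> b n^2"
    unfolding k(2)[symmetric] k(3) using frac by linarith+
qed

lemma c_sq_le:
  assumes "1 \<le> n" "n \<le> N - 1"
  shows "c n^2 \<le> 4 / (9 * (real N - real n))"
  using c_sq_le_if_b_sq_ge[OF assms _ b_sq_bounds(3)[OF assms(2)]] assms by simp

lemma b_minus_2a_bounds_from_terminal: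
  "k \<le> N - 1 \<Longrightarrow>
     0 \<le> b (N - 1 - k) - 2 * a (N - 1 - k)
     \<and> b (N - 1 - k) - 2 * a (N - 1 - k) + 1 / (2 * b (N - 1 - k)) \<le> 3/2"
proof (induction k)
  case 0
  show ?case
    by (simp only: diff_zero a_terminal b_terminal) simp
next
  case (Suc k)
  define n where "n = N - 1 - k"
  have n: "1 \<le> n" "n \<le> N - 1" "N - 1 - Suc k = n - 1"
    using Suc.prems by (auto simp: n_def)
  define d where "d m = b m - 2 * a m" for m
  have IH: "0 \<le> d n" "d n + 1 / (2 * b n) \<le> 3/2"
    using Suc.IH[OF Suc_leD[OF Suc.prems]] unfolding n_def d_def by blast+
  have c: "c n > 0"
    using c_pos_before_terminal[OF n(1,2)] .
  have d_step: "d (n - 1) = d n / sqrt (1 + c n^2) + c n^3 / (1 + c n^2)"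
    using step_closed_forms(3)[OF n(1,2)] by (simp add: d_def)
  have p: "0 < 1 + c n^2"
    by (simp add: add_pos_nonneg)
  then have "0 \<le> d n / sqrt (1 + c n^2)" "d n / sqrt (1 + c n^2) \<le> d n"
    using IH(1) by (simp_all add: divide_le_eq mult_le_cancel_left1)
  moreover have "0 \<le> c n^3 / (1 + c n^2)" "c n^3 / (1 + c n^2) \<le> c n^3"
    using c p by (simp_all add: divide_le_eq mult_le_cancel_left1)
  moreover have "1 / (2 * b n) = (1 / b n) / 2" "1 / (2 * b (n - 1)) = (1 / b (n - 1)) / 2"
    by simp_all
  ultimately show ?case
    using IH d_step inverse_b_increment[OF n(1,2)] unfolding n(3) d_def[symmetric] by linarith
qed

lemma b_minus_2a_bounds:
  assumes "n \<le> N - 1"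
  shows "0 \<le> b n - 2 * a n" "b n - 2 * a n \<le> 3/2"
proof -
  have "N - 1 - (N - 1 - n) = n"
    using assms by simp
  with b_minus_2a_bounds_from_terminal[of "N - 1 - n"]
  have "0 \<le> b n - 2 * a n" "b n - 2 * a n + 1 / (2 * b n) \<le> 3/2"
    by simp_all
  moreover have "0 < 1 / (2 * b n)"
    using b_pos[OF assms] by simp
  ultimately show "0 \<le> b n - 2 * a n" "b n - 2 * a n \<le> 3/2"
    by linarith+
qed

lemma b_sq_product_step:
  assumes "1 \<le> n" "n \<le> N - 1"
  shows "b n^2 * (1 + c n^2)^3 \<le> b (n - 1)^2"
    and "b (n - 1)^2 \<le> b n^2 * (1 + c n^2)^3 * exp (4 * (c n^2)^3)"
proof -
  define x where "x = c n^2"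
  define \<rho> where "\<rho> = (1 + 2 * x) / ((1 - x^2) * (1 + x)^2)"
  have "x \<le> 4 / (9 * (real N - real n))"
    using c_sq_le[OF assms] by (simp add: x_def)
  also have "\<dots> \<le> 4 / 9"
    using assms by (simp add: divide_simps)
  finally have x: "0 < x" "x \<le> 1/2"
    using c_pos_before_terminal[OF assms] by (simp_all add: x_def)
  have "1 \<le> \<rho>" "\<rho> \<le> 1 + 2 * x^3"
    using closed_form_ratio_bounds[OF x] by (simp_all add: \<rho>_def)
  moreover have "1 + 2 * x^3 \<le> exp (2 * x^3)"
    by (rule exp_ge_add_one_self)
  ultimately have "1 \<le> \<rho>" "\<rho> \<le> exp (2 * x^3)"
    by linarith+
  then have "1 \<le> \<rho>^2" "\<rho>^2 \<le> exp (2 * x^3)^2"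
    by (simp_all add: power_mono)
  moreover have "exp (2 * x^3)^2 = exp (4 * x^3)"
    by (simp flip: exp_double)
  ultimately have \<rho>: "1 \<le> \<rho>^2" "\<rho>^2 \<le> exp (4 * x^3)"
    by simp_all
  define Y where "Y = b n^2 * (1 + x)^3"
  have Y: "0 \<le> Y"
    using x by (simp add: Y_def)
  have "b (n - 1)^2 = \<rho>^2 * Y"
    using b_sq_ratio[OF assms] by (simp add: \<rho>_def x_def Y_def)
  with mult_right_mono[OF \<rho>(1) Y] mult_right_mono[OF \<rho>(2) Y]
  show "b n^2 * (1 + c n^2)^3 \<le> b (n - 1)^2"
    and "b (n - 1)^2 \<le> b n^2 * (1 + c n^2)^3 * exp (4 * (c n^2)^3)"
    by (simp_all add: Y_def x_def mult.commute)
qed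

lemma b0_sq_product_bounds:
  "n \<le> N - 1 \<Longrightarrow>
     b n^2 * (\<Prod>j\<in>{1..n}. 1 + c j^2)^3 \<le> b 0^2
     \<and> b 0^2 \<le> b n^2 * (\<Prod>j\<in>{1..n}. 1 + c j^2)^3 * exp (4 * (\<Sum>j\<in>{1..n}. (c j^2)^3))"
proof (induction n)
  case (Suc n)
  define P where "P = (\<Prod>j\<in>{1..n}. 1 + c j^2)^3"
  define E where "E = exp (4 * (\<Sum>j\<in>{1..n}. (c j^2)^3))"
  have n: "1 \<le> Suc n" "Suc n \<le> N - 1"
    using Suc.prems by auto
  have IH: "b n^2 * P \<le> b 0^2" "b 0^2 \<le> b n^2 * P * E"
    using Suc by (simp_all add: P_def E_def)
  have PE: "0 \<le> P" "0 \<le> E"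
    unfolding P_def E_def by (simp_all add: prod_nonneg)
  note step = b_sq_product_step[OF n, unfolded diff_Suc_1]
  have "b (Suc n)^2 * (1 + c (Suc n)^2)^3 * P \<le> b 0^2"
    using IH(1) mult_right_mono[OF step(1) PE(1)] by linarith
  moreover have "b 0^2 \<le> b (Suc n)^2 * (1 + c (Suc n)^2)^3 * exp (4 * (c (Suc n)^2)^3) * P * E"
    using IH(2) mult_right_mono[OF mult_right_mono[OF step(2) PE(1)] PE(2)] by linarith
  ultimately show ?case
    by (simp add: P_def E_def power_mult_distrib exp_add distrib_left mult_ac)
qed simp

lemma sum_c_sq_cube_le:
  assumes "n \<le> N - 1"
  shows "(\<Sum>j\<in>{1..n}. (c j^2)^3) \<le> real n * (4 / (9 * (real N - real n)))^3"
proof -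
  have "(c j^2)^3 \<le> (4 / (9 * (real N - real n)))^3" if "j \<in> {1..n}" for j
  proof -
    have "c j^2 \<le> 4 / (9 * (real N - real j))"
      using that assms by (intro c_sq_le) auto
    also have "\<dots> \<le> 4 / (9 * (real N - real n))"
      using that assms by (intro divide_left_mono mult_left_mono mult_pos_pos) auto
    finally show ?thesis
      by (intro power_mono) auto
  qed
  then show ?thesis
    using sum_bounded_above[of "{1..n}" "\<lambda>j. (c j^2)^3"] by simp
qed

lemma b0_sq_upper_bound:
  assumes "n \<le> N - 1"
  shows "b 0^2 \<le> b n^2 * (\<Prod>j\<in>{1..n}. 1 + c j^2)^3 * exp (4 * (real n * (4 / (9 * (real N - real n)))^3))"
proof -
  have "b 0^2 \<le> b n^2 * (\<Prod>j\<in>{1..n}. 1 + c j^2)^3 * exp (4 * (\<Sum>j\<in>{1..n}. (c j^2)^3))"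
    using b0_sq_product_bounds[OF assms] by blast
  also have "\<dots> \<le> b n^2 * (\<Prod>j\<in>{1..n}. 1 + c j^2)^3 * exp (4 * (real n * (4 / (9 * (real N - real n)))^3))"
    using sum_c_sq_cube_le[OF assms]
    by (intro mult_left_mono) (auto intro!: mult_nonneg_nonneg zero_le_power2 zero_le_power prod_nonneg)
  finally show ?thesis .
qed

end

section \<open>Limits along \<open>n = [N t]\<close>\<close>

lemma Sigma_eq_div_prod: "Sigma c S0 N n = S0 / (\<Prod>j\<in>{1..n}. 1 + c N j^2)"
  by (induction n) (simp_all add: add.commute)

lemma dt_powr_half: "N > 0 \<Longrightarrow> dt N powr (1/2) = 1 / sqrt (real N)"
  by (simp add: dt_def powr_half_sqrt real_sqrt_divide)

lemma filterlim_at_top_if_dt_scaled_tendsto: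
  fixes f :: "nat \<Rightarrow> real"
  assumes "(\<lambda>N. f N * dt N powr (1/2)) \<longlonglongrightarrow> L" "L > 0"
  shows "filterlim f at_top sequentially"
proof (rule filterlim_at_top_mono)
  show "filterlim (\<lambda>N. f N * dt N powr (1/2) * sqrt (real N)) at_top sequentially"
    by (rule filterlim_tendsto_pos_mult_at_top[OF assms]) real_asymp
  show "\<forall>\<^sub>F N in sequentially. f N * dt N powr (1/2) * sqrt (real N) \<le> f N"
    using eventually_gt_at_top[of 0] by eventually_elim (simp add: dt_powr_half)
qed

lemma sqrt_div_3: "u \<ge> 0 \<Longrightarrow> sqrt (u / 3) = sqrt 3 / 3 * u powr (1/2)"
  by (cases "u = 0") (simp_all add: powr_half_sqrt real_sqrt_divide field_simps)

lemma inverse_scaled_sqrt_third: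
  "u > 0 \<Longrightarrow> 1 / (3 * (sqrt 3 / 3 * u powr (1/2))) = sqrt 3 / 3 * (1 / u powr (1/2))"
  by (simp add: field_simps)

lemma cube_of_quotient_bounds:
  fixes P B B0 S E :: real
  assumes "P > 0" "B > 0" "B0 > 0" "S \<ge> 0" "B * P^3 \<le> B0" "B0 \<le> B * P^3 * E"
  shows "S^3 * (B / B0) \<le> (S / P)^3" "(S / P)^3 \<le> S^3 * (B / B0) * E"
proof -
  have "B / B0 \<le> 1 / P^3" "1 / P^3 \<le> (B / B0) * E"
    using assms by (simp_all add: divide_simps mult.commute mult.left_commute)
  moreover have "0 \<le> S^3"
    using assms(4) by simp
  ultimately have "S^3 * (B / B0) \<le> S^3 * (1 / P^3)" "S^3 * (1 / P^3) \<le> S^3 * ((B / B0) * E)"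
    by (simp_all only: mult_left_mono)
  moreover have "S^3 * (1 / P^3) = (S / P)^3"
    by (simp add: power_divide)
  ultimately show "S^3 * (B / B0) \<le> (S / P)^3" "(S / P)^3 \<le> S^3 * (B / B0) * E"
    by (simp_all only: mult.assoc)
qed

lemma cube_root_of_cube_mult:
  fixes x u :: real
  assumes "x > 0" "u > 0"
  shows "(x^3 * u) powr (1/3) = u powr (1/3) * x"
proof -
  have "(x^3) powr (1/3) = x"
    using assms powr_powr[of x 3 "1/3"] by (simp add: powr_realpow)
  then show ?thesis
    using assms by (simp add: powr_mult)
qed

lemma beta_limit_constant:
  fixes u S0 su :: real
  assumes "u > 0" "S0 > 0"
  shows "sqrt 3 / 3 * (1 / u powr (1/2)) * su * (u powr (1/3) * S0) powr (-1/2)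
    = sqrt 3 * su / (3 * u powr (2/3) * S0 powr (1/2))"
proof -
  have "(u powr (1/3) * S0) powr (-1/2) = u powr (-1/6) * S0 powr (-1/2)"
    using assms by (simp add: powr_mult powr_powr)
  moreover have "u powr (1/2) / u powr (-1/6) = u powr (2/3)"
    using assms by (simp add: powr_diff[symmetric])
  ultimately show ?thesis
    using assms by (simp add: powr_minus_divide field_simps)
qed

lemma lambda_limit_constant:
  fixes u S0 su :: real
  assumes "u > 0" "S0 > 0" "su > 0"
  shows "sqrt 3 * su / (3 * u powr (2/3) * S0 powr (1/2)) * (u powr (1/3) * S0) / su^2
    = sqrt 3 * S0 powr (1/2) / (3 * u powr (1/3) * su)"
proof -
  have "u powr (2/3) = u powr (1/3) * u powr (1/3)" "S0 = S0 powr (1/2) * S0 powr (1/2)"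
    using assms by (simp_all flip: powr_add)
  then show ?thesis
    using assms by (simp add: field_simps power2_eq_square)
qed

locale insider_family =
  fixes a b c :: "nat \<Rightarrow> nat \<Rightarrow> real" and t :: real
  assumes c_pos: "\<And>N n. N \<ge> 1 \<Longrightarrow> 1 \<le> n \<Longrightarrow> n \<le> N \<Longrightarrow> c N n > 0"
    and a_terminal: "\<And>N. N \<ge> 1 \<Longrightarrow> a N (N - 1) = 0"
    and b_terminal: "\<And>N. N \<ge> 1 \<Longrightarrow> b N (N - 1) = 1/2"
    and rec_a: "\<And>N n. N \<ge> 1 \<Longrightarrow> 1 \<le> n \<Longrightarrow> n \<le> N - 1 \<Longrightarrow>
       a N (n - 1) = a N n * (1 / ((c N n)^2 + 1)) powr (1/2)
                     + b N n * (1 / ((c N n)^2 + 1)) powr (3/2) * (c N n)^2"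
    and rec_b: "\<And>N n. N \<ge> 1 \<Longrightarrow> 1 \<le> n \<Longrightarrow> n \<le> N - 1 \<Longrightarrow>
       b N (n - 1) = b N n * (1 / ((c N n)^2 + 1)) powr (3/2) + c N n / ((c N n)^2 + 1)"
    and rec_c: "\<And>N n. N \<ge> 1 \<Longrightarrow> 1 \<le> n \<Longrightarrow> n \<le> N - 1 \<Longrightarrow>
       - 3 * b N n * c N n + ((c N n)^2 + 1) powr (1/2) * (1 - (c N n)^2) = 0"
    and t: "0 < t" "t < 1"
begin

abbreviation idx :: "nat \<Rightarrow> nat" where
  "idx N \<equiv> nat \<lfloor>real N * t\<rfloor>"

lemma eventually_idx_regime:
  "\<forall>\<^sub>F N in sequentially. backward_recursion (a N) (b N) (c N) N
     \<and> 1 \<le> idx N \<and> idx N \<le> N - 1 \<and> real N * t - 1 \<le> real (idx N) \<and> real (idx N) \<le> real N * t"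
proof -
  have "\<forall>\<^sub>F N in sequentially. 1 \<le> real N * t"
    using t by real_asymp
  then show ?thesis
  proof eventually_elim
    case (elim N)
    then have "N \<ge> 1"
      by (cases N) auto
    then have "backward_recursion (a N) (b N) (c N) N"
      by unfold_locales (blast intro: c_pos a_terminal b_terminal rec_a rec_b rec_c)+
    moreover have "real N * t < real N"
      using t \<open>N \<ge> 1\<close> by simp
    moreover have "1 \<le> \<lfloor>real N * t\<rfloor>" "\<lfloor>real N * t\<rfloor> < int N"
      using elim \<open>real N * t < real N\<close> by (simp_all add: le_floor_iff floor_less_iff)
    moreover have "real N * t - 1 < real_of_int \<lfloor>real N * t\<rfloor>"
      by linarith
    ultimately show ?case
      by (simp add: le_nat_iff nat_less_iff)
  qed
qed

lemma eventually_b_sq_bounds: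
  "\<forall>\<^sub>F N in sequentially. 1/6 + (real N * (1 - t) - 1) / 3 \<le> b N (idx N)^2
     \<and> b N (idx N)^2 \<le> 1/4 + real N * (1 - t) / 3"
  using eventually_idx_regime
proof eventually_elim
  case (elim N)
  then interpret backward_recursion "a N" "b N" "c N" N
    by simp
  have "idx N \<le> N - 1" "real N * t - 1 \<le> real (idx N)" "real (idx N) \<le> real N * t"
    using elim by blast+
  moreover have "real N * (1 - t) = real N - real N * t"
    by (simp add: algebra_simps)
  ultimately show ?case
    using b_sq_bounds(1,2)[of "idx N"] unfolding add_divide_distrib diff_divide_distrib by linarith
qed

lemma eventually_b0_sq_bounds:
  "\<forall>\<^sub>F N in sequentially. 1/6 + (real N - 1) / 3 \<le> b N 0^2 \<and> b N 0^2 \<le> 1/4 + (real N - 1) / 3"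
  using eventually_idx_regime
proof eventually_elim
  case (elim N)
  then interpret backward_recursion "a N" "b N" "c N" N
    by simp
  from b_sq_bounds(1,2)[of 0] show ?case
    by simp
qed

lemma b_sq_scaled_tendsto: "(\<lambda>N. b N (idx N)^2 / real N) \<longlonglongrightarrow> (1 - t) / 3"
proof (rule tendsto_sandwich)
  show "\<forall>\<^sub>F N in sequentially. (1/6 + (real N * (1 - t) - 1) / 3) / real N \<le> b N (idx N)^2 / real N"
    and "\<forall>\<^sub>F N in sequentially. b N (idx N)^2 / real N \<le> (1/4 + real N * (1 - t) / 3) / real N"
    using eventually_b_sq_bounds by (eventually_elim, simp add: divide_right_mono)+
  show "(\<lambda>N. (1/6 + (real N * (1 - t) - 1) / 3) / real N) \<longlonglongrightarrow> (1 - t) / 3"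
    and "(\<lambda>N. (1/4 + real N * (1 - t) / 3) / real N) \<longlonglongrightarrow> (1 - t) / 3"
    by real_asymp+
qed

lemma b0_sq_scaled_tendsto: "(\<lambda>N. b N 0^2 / real N) \<longlonglongrightarrow> 1 / 3"
proof (rule tendsto_sandwich)
  show "\<forall>\<^sub>F N in sequentially. (1/6 + (real N - 1) / 3) / real N \<le> b N 0^2 / real N"
    and "\<forall>\<^sub>F N in sequentially. b N 0^2 / real N \<le> (1/4 + (real N - 1) / 3) / real N"
    using eventually_b0_sq_bounds by (eventually_elim, simp add: divide_right_mono)+
  show "(\<lambda>N. (1/6 + (real N - 1) / 3) / real N) \<longlonglongrightarrow> 1 / 3"
    and "(\<lambda>N. (1/4 + (real N - 1) / 3) / real N) \<longlonglongrightarrow> 1 / 3"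
    by real_asymp+
qed

lemma b_scaled_tendsto:
  "(\<lambda>N. b N (idx N) * dt N powr (1/2)) \<longlonglongrightarrow> sqrt 3 / 3 * (1 - t) powr (1/2)"
proof -
  have "(\<lambda>N. sqrt (b N (idx N)^2 / real N)) \<longlonglongrightarrow> sqrt ((1 - t) / 3)"
    by (intro tendsto_real_sqrt b_sq_scaled_tendsto)
  moreover have "\<forall>\<^sub>F N in sequentially. sqrt (b N (idx N)^2 / real N) = b N (idx N) * dt N powr (1/2)"
    using eventually_idx_regime
  proof eventually_elim
    case (elim N)
    then interpret backward_recursion "a N" "b N" "c N" N
      by simp
    have "b N (idx N) > 0" "N > 0"
      using elim b_pos[of "idx N"] by auto
    then show ?case
      by (simp add: dt_powr_half real_sqrt_divide)
  qed
  ultimately show ?thesis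
    using sqrt_div_3[of "1 - t"] t by (simp add: Lim_transform_eventually)
qed

lemma b_idx_at_top: "filterlim (\<lambda>N. b N (idx N)) at_top sequentially"
  by (rule filterlim_at_top_if_dt_scaled_tendsto[OF b_scaled_tendsto]) (use t in simp)

lemma c_idx_tendsto_0: "(\<lambda>N. c N (idx N)) \<longlonglongrightarrow> 0"
proof -
  have bounds: "\<forall>\<^sub>F N in sequentially. 0 \<le> c N (idx N) \<and> c N (idx N) \<le> inverse (b N (idx N)) / 3"
    using eventually_idx_regime
  proof eventually_elim
    case (elim N)
    then interpret backward_recursion "a N" "b N" "c N" N
      by simp
    have n: "1 \<le> idx N" "idx N \<le> N - 1"
      using elim by blast+
    have "3 * c N (idx N) * b N (idx N) \<le> 1" "0 < b N (idx N)" "0 < c N (idx N)"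
      using c_pos_before_terminal[OF n] c_mult_b_le[OF n] b_pos[OF n(2)] by simp_all
    then show ?case
      by (simp add: field_simps)
  qed
  have lim: "(\<lambda>N. inverse (b N (idx N)) / 3) \<longlonglongrightarrow> 0"
    using tendsto_divide[OF tendsto_inverse_0_at_top[OF b_idx_at_top] tendsto_const[of 3]] by simp
  have lo: "\<forall>\<^sub>F N in sequentially. 0 \<le> c N (idx N)"
    and hi: "\<forall>\<^sub>F N in sequentially. c N (idx N) \<le> inverse (b N (idx N)) / 3"
    using bounds by (rule eventually_mono, blast)+
  show ?thesis
    by (rule tendsto_sandwich[OF lo hi tendsto_const lim])
qed

lemma c_scaled_tendsto:
  "(\<lambda>N. c N (idx N) / dt N powr (1/2)) \<longlonglongrightarrow> sqrt 3 / 3 * (1 / (1 - t) powr (1/2))"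
proof -
  have "(\<lambda>N. (1 - c N (idx N)^2) * sqrt (1 + c N (idx N)^2) / (3 * (b N (idx N) * dt N powr (1/2))))
      \<longlonglongrightarrow> (1 - 0^2) * sqrt (1 + 0^2) / (3 * (sqrt 3 / 3 * (1 - t) powr (1/2)))"
    using t by (intro tendsto_intros c_idx_tendsto_0 b_scaled_tendsto) auto
  moreover have "\<forall>\<^sub>F N in sequentially.
      (1 - c N (idx N)^2) * sqrt (1 + c N (idx N)^2) / (3 * (b N (idx N) * dt N powr (1/2)))
      = c N (idx N) / dt N powr (1/2)"
    using eventually_idx_regime
  proof eventually_elim
    case (elim N)
    then interpret backward_recursion "a N" "b N" "c N" N
      by simp
    have n: "1 \<le> idx N" "idx N \<le> N - 1"
      using elim by blast+
    from c_eq_closed_form[OF n] show ?case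
      by (metis divide_divide_eq_left)
  qed
  ultimately show ?thesis
    using inverse_scaled_sqrt_third[of "1 - t"] t by (simp add: Lim_transform_eventually)
qed

lemma a_scaled_tendsto:
  "(\<lambda>N. a N (idx N) * dt N powr (1/2)) \<longlonglongrightarrow> sqrt 3 / 6 * (1 - t) powr (1/2)"
proof -
  have bounds: "\<forall>\<^sub>F N in sequentially.
      0 \<le> b N (idx N) - 2 * a N (idx N) \<and> b N (idx N) - 2 * a N (idx N) \<le> 3/2"
    using eventually_idx_regime
  proof eventually_elim
    case (elim N)
    then interpret backward_recursion "a N" "b N" "c N" N
      by simp
    show ?case
      using b_minus_2a_bounds[of "idx N"] elim by simp
  qed
  have "\<forall>\<^sub>F N in sequentially. 0 \<le> (b N (idx N) - 2 * a N (idx N)) * dt N powr (1/2)"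
    using bounds by (rule eventually_mono) simp
  moreover have "\<forall>\<^sub>F N in sequentially.
      (b N (idx N) - 2 * a N (idx N)) * dt N powr (1/2) \<le> 3/2 * dt N powr (1/2)"
    using bounds by (rule eventually_mono) (intro mult_right_mono; simp)
  moreover have "(\<lambda>N. 3/2 * dt N powr (1/2)) \<longlonglongrightarrow> 0"
    unfolding dt_def by real_asymp
  ultimately have gap: "(\<lambda>N. (b N (idx N) - 2 * a N (idx N)) * dt N powr (1/2)) \<longlonglongrightarrow> 0"
    by (rule tendsto_sandwich[OF _ _ tendsto_const])
  have "(\<lambda>N. (b N (idx N) * dt N powr (1/2) - (b N (idx N) - 2 * a N (idx N)) * dt N powr (1/2)) / 2)
      \<longlonglongrightarrow> (sqrt 3 / 3 * (1 - t) powr (1/2) - 0) / 2"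
    by (intro tendsto_divide tendsto_diff b_scaled_tendsto gap tendsto_const) simp
  moreover have "(b N (idx N) * dt N powr (1/2) - (b N (idx N) - 2 * a N (idx N)) * dt N powr (1/2)) / 2
      = a N (idx N) * dt N powr (1/2)" for N
    by (simp add: left_diff_distrib)
  ultimately show ?thesis
    by simp
qed

lemma a_idx_at_top: "filterlim (\<lambda>N. a N (idx N)) at_top sequentially"
  by (rule filterlim_at_top_if_dt_scaled_tendsto[OF a_scaled_tendsto]) (use t in simp)

lemma b_sq_ratio_tendsto: "(\<lambda>N. b N (idx N)^2 / b N 0^2) \<longlonglongrightarrow> 1 - t"
proof -
  have "((1 - t) / 3) / (1 / 3) = 1 - t"
    by simp
  moreover have "(\<lambda>N. (b N (idx N)^2 / real N) / (b N 0^2 / real N)) \<longlonglongrightarrow> ((1 - t) / 3) / (1 / 3)"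
    by (intro tendsto_divide b_sq_scaled_tendsto b0_sq_scaled_tendsto) simp
  ultimately have "(\<lambda>N. (b N (idx N)^2 / real N) / (b N 0^2 / real N)) \<longlonglongrightarrow> 1 - t"
    by (simp only:)
  moreover have "\<forall>\<^sub>F N in sequentially.
      (b N (idx N)^2 / real N) / (b N 0^2 / real N) = b N (idx N)^2 / b N 0^2"
    using eventually_gt_at_top[of 0] by eventually_elim (simp add: divide_divide_times_eq)
  ultimately show ?thesis
    by (rule Lim_transform_eventually)
qed

lemma eventually_idx_exponent_le:
  "\<forall>\<^sub>F N in sequentially.
     real (idx N) * (4 / (9 * (real N - real (idx N))))^3 \<le> real N * (4 / (9 * (real N * (1 - t))))^3"
  using eventually_idx_regime
proof eventually_elim
  case (elim N)
  then have n: "1 \<le> idx N" "idx N \<le> N - 1" "real (idx N) \<le> real N * t"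
    by blast+
  then have "real N > 0"
    by simp
  with n t have "real N * (1 - t) \<le> real N - real (idx N)" "real N * (1 - t) > 0"
    by (simp_all add: algebra_simps)
  then have "4 / (9 * (real N - real (idx N))) \<le> 4 / (9 * (real N * (1 - t)))"
    by (intro frac_le) auto
  moreover have "real (idx N) \<le> real N"
    using n by simp
  ultimately show ?case
    using n t by (intro mult_mono power_mono) auto
qed

lemma Sigma_cube_tendsto:
  assumes "S0 > 0"
  shows "(\<lambda>N. Sigma c S0 N (idx N)^3) \<longlonglongrightarrow> S0^3 * (1 - t)"
proof (rule tendsto_sandwich)
  define E where "E N = exp (4 * (real N * (4 / (9 * (real N * (1 - t))))^3))" for N
  have bounds: "\<forall>\<^sub>F N in sequentially. S0^3 * (b N (idx N)^2 / b N 0^2) \<le> Sigma c S0 N (idx N)^3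
     \<and> Sigma c S0 N (idx N)^3 \<le> S0^3 * (b N (idx N)^2 / b N 0^2) * E N"
    using eventually_idx_regime eventually_idx_exponent_le
  proof eventually_elim
    case (elim N)
    then interpret backward_recursion "a N" "b N" "c N" N
      by simp
    define n where "n = idx N"
    define P where "P = (\<Prod>j\<in>{1..n}. 1 + c N j^2)"
    have n: "1 \<le> n" "n \<le> N - 1"
      using elim by (simp_all add: n_def)
    have P: "P > 0"
      unfolding P_def by (intro prod_pos) (auto simp: add_pos_nonneg)
    have "b N 0^2 \<le> b N n^2 * P^3 * exp (4 * (real n * (4 / (9 * (real N - real n)))^3))"
      using b0_sq_upper_bound[OF n(2)] by (simp add: P_def)
    also have "\<dots> \<le> b N n^2 * P^3 * E N"
      using elim P unfolding E_def n_def by (intro mult_left_mono) auto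
    finally have "b N 0^2 \<le> b N n^2 * P^3 * E N" .
    moreover have "b N n^2 * P^3 \<le> b N 0^2"
      using b0_sq_product_bounds[OF n(2)] unfolding P_def by blast
    moreover have "b N n^2 > 0" "b N 0^2 > 0"
      using b_pos[of n] b_pos[of 0] n by simp_all
    ultimately show ?case
      using cube_of_quotient_bounds[OF P, of "b N n^2" "b N 0^2" S0 "E N"] assms
      by (simp add: Sigma_eq_div_prod P_def n_def)
  qed
  show "\<forall>\<^sub>F N in sequentially. S0^3 * (b N (idx N)^2 / b N 0^2) \<le> Sigma c S0 N (idx N)^3"
    and "\<forall>\<^sub>F N in sequentially. Sigma c S0 N (idx N)^3 \<le> S0^3 * (b N (idx N)^2 / b N 0^2) * E N"
    using bounds by (rule eventually_mono, blast)+
  show lower: "(\<lambda>N. S0^3 * (b N (idx N)^2 / b N 0^2)) \<longlonglongrightarrow> S0^3 * (1 - t)"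
    by (intro tendsto_mult tendsto_const b_sq_ratio_tendsto)
  have "(\<lambda>N. E N) \<longlonglongrightarrow> 1"
    unfolding E_def using t by real_asymp
  from tendsto_mult[OF lower this]
  show "(\<lambda>N. S0^3 * (b N (idx N)^2 / b N 0^2) * E N) \<longlonglongrightarrow> S0^3 * (1 - t)"
    by simp
qed

lemma Sigma_tendsto:
  assumes "S0 > 0"
  shows "(\<lambda>N. Sigma c S0 N (idx N)) \<longlonglongrightarrow> (1 - t) powr (1/3) * S0"
proof -
  have "(\<lambda>N. (Sigma c S0 N (idx N)^3) powr (1/3)) \<longlonglongrightarrow> (S0^3 * (1 - t)) powr (1/3)"
    using assms t by (intro tendsto_powr Sigma_cube_tendsto tendsto_const) auto
  moreover have "Sigma c S0 N n > 0" for N n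
    using assms by (simp add: Sigma_eq_div_prod prod_pos add_pos_nonneg)
  ultimately show ?thesis
    using cube_root_of_cube_mult[of _ 1] cube_root_of_cube_mult[OF assms, of "1 - t"] t by simp
qed

lemma Sigma_prev_tendsto:
  assumes "S0 > 0"
  shows "(\<lambda>N. Sigma c S0 N (idx N - 1)) \<longlonglongrightarrow> (1 - t) powr (1/3) * S0"
proof -
  have "(\<lambda>N. Sigma c S0 N (idx N) * (1 + c N (idx N)^2)) \<longlonglongrightarrow> (1 - t) powr (1/3) * S0 * (1 + 0^2)"
    by (intro tendsto_intros Sigma_tendsto c_idx_tendsto_0 assms)
  moreover have "\<forall>\<^sub>F N in sequentially. Sigma c S0 N (idx N) * (1 + c N (idx N)^2) = Sigma c S0 N (idx N - 1)"
    using eventually_idx_regime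
  proof eventually_elim
    case (elim N)
    then have "idx N = Suc (idx N - 1)"
      by simp
    then have "Sigma c S0 N (idx N) = Sigma c S0 N (idx N - 1) / (1 + c N (idx N)^2)"
      by (metis Sigma.simps(2))
    moreover have "1 + c N (idx N)^2 \<noteq> 0"
      by (metis add_pos_nonneg less_irrefl zero_le_power2 zero_less_one)
    ultimately show ?case
      by simp
  qed
  ultimately show ?thesis
    by (simp add: Lim_transform_eventually)
qed

lemma beta_scaled_tendsto:
  assumes "S0 > 0" "su > 0"
  shows "(\<lambda>N. beta c S0 su N (idx N) / dt N)
    \<longlonglongrightarrow> sqrt 3 * su / (3 * (1 - t) powr (2/3) * S0 powr (1/2))"
proof -
  have "(\<lambda>N. c N (idx N) / dt N powr (1/2) * su * Sigma c S0 N (idx N - 1) powr (-1/2))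
      \<longlonglongrightarrow> sqrt 3 / 3 * (1 / (1 - t) powr (1/2)) * su * ((1 - t) powr (1/3) * S0) powr (-1/2)"
    using assms t by (intro tendsto_intros c_scaled_tendsto Sigma_prev_tendsto) auto
  moreover have "\<forall>\<^sub>F N in sequentially.
      c N (idx N) / dt N powr (1/2) * su * Sigma c S0 N (idx N - 1) powr (-1/2) = beta c S0 su N (idx N) / dt N"
    using eventually_gt_at_top[of 0]
  proof eventually_elim
    case (elim N)
    then have "dt N = dt N powr (1/2) * dt N powr (1/2)" "dt N powr (1/2) > 0"
      by (simp_all add: dt_def flip: powr_add)
    then show ?case
      unfolding beta_def by (simp add: field_simps)
  qed
  ultimately show ?thesis
    using beta_limit_constant[of "1 - t" S0 su] assms t by (simp add: Lim_transform_eventually)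
qed

lemma lambda_tendsto:
  assumes "S0 > 0" "su > 0"
  shows "(\<lambda>N. lambda c S0 su N (idx N)) \<longlonglongrightarrow> sqrt 3 * S0 powr (1/2) / (3 * (1 - t) powr (1/3) * su)"
proof -
  define \<beta>' where "\<beta>' N = beta c S0 su N (idx N) / dt N" for N
  define \<Sigma>' where "\<Sigma>' N = Sigma c S0 N (idx N - 1)" for N
  define Lb where "Lb = sqrt 3 * su / (3 * (1 - t) powr (2/3) * S0 powr (1/2))"
  have "\<beta>' \<longlonglongrightarrow> Lb" "\<Sigma>' \<longlonglongrightarrow> (1 - t) powr (1/3) * S0"
    unfolding \<beta>'_def \<Sigma>'_def Lb_def using beta_scaled_tendsto Sigma_prev_tendsto assms by simp_all
  moreover have "dt \<longlonglongrightarrow> 0"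
    unfolding dt_def by real_asymp
  ultimately have "(\<lambda>N. \<beta>' N * \<Sigma>' N / (\<beta>' N^2 * \<Sigma>' N * dt N + su^2))
      \<longlonglongrightarrow> Lb * ((1 - t) powr (1/3) * S0) / (Lb^2 * ((1 - t) powr (1/3) * S0) * 0 + su^2)"
    using assms by (intro tendsto_intros) auto
  moreover have "\<forall>\<^sub>F N in sequentially.
      \<beta>' N * \<Sigma>' N / (\<beta>' N^2 * \<Sigma>' N * dt N + su^2) = lambda c S0 su N (idx N)"
    using eventually_gt_at_top[of 0]
  proof eventually_elim
    case (elim N)
    have "dt N > 0" "\<Sigma>' N > 0"
      using elim assms by (simp_all add: dt_def \<Sigma>'_def Sigma_eq_div_prod prod_pos add_pos_nonneg)
    then show ?case
      using assms unfolding lambda_def \<beta>'_def \<Sigma>'_def[symmetric]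
      by (simp add: field_simps power2_eq_square)
  qed
  ultimately show ?thesis
    using lambda_limit_constant[of "1 - t" S0 su] assms t unfolding Lb_def
    by (simp add: Lim_transform_eventually)
qed

end

theorem theorem6:
  fixes a b c :: "nat \<Rightarrow> nat \<Rightarrow> real" and S0 su t :: real
  assumes cpos: "\<And>N n. N \<ge> 1 \<Longrightarrow> 1 \<le> n \<Longrightarrow> n \<le> N \<Longrightarrow> c N n > 0"
    and aT: "\<And>N. N \<ge> 1 \<Longrightarrow> a N (N - 1) = 0"
    and bT: "\<And>N. N \<ge> 1 \<Longrightarrow> b N (N - 1) = 1/2"
    and cT: "\<And>N. N \<ge> 1 \<Longrightarrow> c N N = 1"
    and reca: "\<And>N n. N \<ge> 1 \<Longrightarrow> 1 \<le> n \<Longrightarrow> n \<le> N - 1 \<Longrightarrow>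
       a N (n - 1) = a N n * (1 / ((c N n)^2 + 1)) powr (1/2)
                     + b N n * (1 / ((c N n)^2 + 1)) powr (3/2) * (c N n)^2"
    and recb: "\<And>N n. N \<ge> 1 \<Longrightarrow> 1 \<le> n \<Longrightarrow> n \<le> N - 1 \<Longrightarrow>
       b N (n - 1) = b N n * (1 / ((c N n)^2 + 1)) powr (3/2) + c N n / ((c N n)^2 + 1)"
    and recc: "\<And>N n. N \<ge> 1 \<Longrightarrow> 1 \<le> n \<Longrightarrow> n \<le> N - 1 \<Longrightarrow>
       - 3 * b N n * c N n + ((c N n)^2 + 1) powr (1/2) * (1 - (c N n)^2) = 0"
    and S0pos: "S0 > 0" and supos: "su > 0"
    and t: "0 < t" "t < 1"
  shows "(\<lambda>N. c N (nat \<lfloor>real N * t\<rfloor>)) \<longlonglongrightarrow> 0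
    \<and> filterlim (\<lambda>N. b N (nat \<lfloor>real N * t\<rfloor>)) at_top sequentially
    \<and> filterlim (\<lambda>N. a N (nat \<lfloor>real N * t\<rfloor>)) at_top sequentially
    \<and> (\<lambda>N. c N (nat \<lfloor>real N * t\<rfloor>) / dt N powr (1/2))
           \<longlonglongrightarrow> sqrt 3 / 3 * (1 / (1 - t) powr (1/2))
    \<and> (\<lambda>N. b N (nat \<lfloor>real N * t\<rfloor>) * dt N powr (1/2))
           \<longlonglongrightarrow> sqrt 3 / 3 * (1 - t) powr (1/2)
    \<and> (\<lambda>N. a N (nat \<lfloor>real N * t\<rfloor>) * dt N powr (1/2))
           \<longlonglongrightarrow> sqrt 3 / 6 * (1 - t) powr (1/2)
    \<and> (\<lambda>N. Sigma c S0 N (nat \<lfloor>real N * t\<rfloor>)) \<longlonglongrightarrow> (1 - t) powr (1/3) * S0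
    \<and> (\<lambda>N. lambda c S0 su N (nat \<lfloor>real N * t\<rfloor>))
           \<longlonglongrightarrow> sqrt 3 * S0 powr (1/2) / (3 * (1 - t) powr (1/3) * su)
    \<and> (\<lambda>N. beta c S0 su N (nat \<lfloor>real N * t\<rfloor>) / dt N)
           \<longlonglongrightarrow> sqrt 3 * su / (3 * (1 - t) powr (2/3) * S0 powr (1/2))"
proof -
  interpret insider_family a b c t
    by unfold_locales (fact cpos aT bT reca recb recc t)+
  show ?thesis
    using c_idx_tendsto_0 b_idx_at_top a_idx_at_top
      c_scaled_tendsto b_scaled_tendsto a_scaled_tendsto
      Sigma_tendsto[OF S0pos] lambda_tendsto[OF S0pos supos] beta_scaled_tendsto[OF S0pos supos]
    by blast
qed

end
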